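(* Let $K$ be a $d$-dimensional convex body with $o\in\mathrm{int}(K)$ and let $0\le\varepsilon<1$. Let $\{v_i+\lambda_iK: i\in I\}$ be a family of positive homothets of $K$ such that $v_i\notin v_j+\lambda_j\,\mathrm{int}(K)$ for all distinct $i,j\in I$, and for all $i\in I$: $\lambda_i\ge1$, $(v_i+\lambda_iK)\cap(-\varepsilon K)\neq\emptyset$ and $o\notin v_i+\lambda_i\,\mathrm{int}(K)$. Then $|I|\le P\!\left(K,\frac{2}{1-\varepsilon}\right)$.
   Context: A convex body is a compact convex set with non-empty interior. For a convex body $L$ with $o\in\mathrm{int}(L)$, $\|x\|_L=\inf\{\mu>0:x\in\mu L\}$. $P(K,\lambda)$ is the maximum number of points $p_1,\dots,p_m$ such that $\max_{i<j}\|p_i-p_j\|_{\frac12(K-K)}\big/\min_{i<j}\|p_i-p_j\|_{K\cap-K}\le\lambda$. *)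

theory Defs
  imports "HOL-Analysis.Analysis"
begin

definition convex_body :: "'a::euclidean_space set \<Rightarrow> bool" where
  "convex_body K \<longleftrightarrow> compact K \<and> convex K \<and> interior K \<noteq> {}"

definition gauge_norm :: "'a::euclidean_space set \<Rightarrow> 'a \<Rightarrow> real" where
  "gauge_norm L x = Inf {\<mu>. \<mu> > 0 \<and> x \<in> (\<lambda>y. \<mu> *\<^sub>R y) ` L}"

definition diff_body :: "'a::euclidean_space set \<Rightarrow> 'a set" where
  "diff_body K = (\<lambda>y. (1/2) *\<^sub>R y) ` {x - y | x y. x \<in> K \<and> y \<in> K}"

definition sym_body :: "'a::euclidean_space set \<Rightarrow> 'a set" where
  "sym_body K = K \<inter> uminus ` K"

text \<open>A finite point set S is admissible for ratio lam if every distance in the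
norm of (K-K)/2 is at most lam times every nonzero distance in the norm of K cap -K,
i.e. max/min <= lam (vacuous for at most one point).\<close>
definition ratio_ok :: "'a::euclidean_space set \<Rightarrow> real \<Rightarrow> 'a set \<Rightarrow> bool" where
  "ratio_ok K lam S \<longleftrightarrow> (\<forall>p\<in>S. \<forall>q\<in>S. \<forall>r\<in>S. \<forall>s\<in>S. p \<noteq> q \<longrightarrow> r \<noteq> s \<longrightarrow>
      gauge_norm (diff_body K) (p - q) \<le> lam * gauge_norm (sym_body K) (r - s))"

definition P_num :: "'a::euclidean_space set \<Rightarrow> real \<Rightarrow> enat" where
  "P_num K lam = Sup {enat (card S) | S. finite S \<and> ratio_ok K lam S}"

definition ecard :: "'i set \<Rightarrow> enat" where
  "ecard I = (if finite I then enat (card I) else \<infinity>)"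

end

theory Submission
  imports Defs
begin

text \<open>Put \<open>\<mu>\<^sub>i = \<lambda>\<^sub>i + \<epsilon>\<close> and \<open>q\<^sub>i = -v\<^sub>i / \<mu>\<^sub>i\<close>. Since \<open>v\<^sub>i + \<lambda>\<^sub>i K\<close> meets \<open>-\<epsilon> K\<close>,
  convexity gives \<open>-v\<^sub>i \<in> \<lambda>\<^sub>i K + \<epsilon> K = \<mu>\<^sub>i K\<close>, i.e. \<open>q\<^sub>i \<in> K\<close>; so every difference
  \<open>q\<^sub>i - q\<^sub>j\<close> lies in \<open>K - K\<close> and has \<open>(K-K)/2\<close>-norm at most 2.
  If \<open>\<lambda>\<^sub>i \<le> \<lambda>\<^sub>j\<close> and \<open>q\<^sub>j - q\<^sub>i \<in> t K\<close> with \<open>t < 1 - \<epsilon>\<close>, then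
  \<open>v\<^sub>i - v\<^sub>j = \<mu>\<^sub>i (q\<^sub>j - q\<^sub>i) + (\<mu>\<^sub>j - \<mu>\<^sub>i) q\<^sub>j \<in> (\<mu>\<^sub>i t + \<mu>\<^sub>j - \<mu>\<^sub>i) K\<close>, and
  \<open>\<mu>\<^sub>i t + \<mu>\<^sub>j - \<mu>\<^sub>i < \<lambda>\<^sub>j\<close> because \<open>\<mu>\<^sub>i \<ge> 1\<close>; so \<open>v\<^sub>i \<in> v\<^sub>j + \<lambda>\<^sub>j int K\<close>, which is excluded.
  Hence the \<open>q\<^sub>i\<close> are pairwise at \<open>(K \<inter> -K)\<close>-distance at least \<open>1 - \<epsilon>\<close>, and the
  ratio of the two norms on them is at most \<open>2 / (1 - \<epsilon>)\<close>.\<close>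

lemma mem_scaleR_image_iff:
  fixes L :: "'a::real_vector set"
  assumes "c \<noteq> 0"
  shows "x \<in> (\<lambda>y. c *\<^sub>R y) ` L \<longleftrightarrow> inverse c *\<^sub>R x \<in> L"
proof
  assume "x \<in> (\<lambda>y. c *\<^sub>R y) ` L"
  then show "inverse c *\<^sub>R x \<in> L" using assms by auto
next
  assume "inverse c *\<^sub>R x \<in> L"
  moreover have "x = c *\<^sub>R (inverse c *\<^sub>R x)" using assms by simp
  ultimately show "x \<in> (\<lambda>y. c *\<^sub>R y) ` L" by blast
qed

lemma convex_scaleR_add_mem:
  fixes L :: "'a::real_vector set"
  assumes "convex L" "0 \<le> a" "0 \<le> b" "0 < a + b" "x \<in> L" "y \<in> L"
  shows "a *\<^sub>R x + b *\<^sub>R y \<in> (\<lambda>z. (a + b) *\<^sub>R z) ` L"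
proof -
  have "(a / (a + b)) *\<^sub>R x + (b / (a + b)) *\<^sub>R y \<in> L"
    using assms by (intro convexD) (auto simp: add_divide_distrib [symmetric])
  moreover have "a *\<^sub>R x + b *\<^sub>R y = (a + b) *\<^sub>R ((a / (a + b)) *\<^sub>R x + (b / (a + b)) *\<^sub>R y)"
    using assms(4) by (simp add: scaleR_add_right)
  ultimately show ?thesis by blast
qed

lemma scaleR_image_mem_interior_of_less:
  fixes L :: "'a::euclidean_space set"
  assumes "convex L" "0 \<in> interior L" "0 < s" "s < l" "x \<in> (\<lambda>y. s *\<^sub>R y) ` L"
  shows "x \<in> (\<lambda>y. l *\<^sub>R y) ` interior L"
proof -
  obtain y where y: "y \<in> L" "x = s *\<^sub>R y" using assms(5) by auto
  have "y - (1 - s / l) *\<^sub>R (y - 0) \<in> interior L"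
    using assms y by (intro mem_interior_convex_shrink) auto
  moreover have "y - (1 - s / l) *\<^sub>R (y - 0) = (s / l) *\<^sub>R y"
    by (simp add: algebra_simps)
  moreover have "x = l *\<^sub>R ((s / l) *\<^sub>R y)" using y assms by simp
  ultimately show ?thesis by (metis image_eqI)
qed

lemma gauge_norm_le:
  assumes "0 < \<mu>" "x \<in> (\<lambda>y. \<mu> *\<^sub>R y) ` L"
  shows "gauge_norm L x \<le> \<mu>"
  unfolding gauge_norm_def
  by (rule cInf_lower) (use assms in \<open>auto intro: bdd_belowI[where m=0]\<close>)

lemma gauge_norm_zero:
  assumes "0 \<in> L"
  shows "gauge_norm L 0 = 0"
proof -
  have "{\<mu>. 0 < \<mu> \<and> 0 \<in> (\<lambda>y. \<mu> *\<^sub>R y) ` L} = {0<..}"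
    using assms by (auto intro: image_eqI[where x = 0])
  then show ?thesis unfolding gauge_norm_def by simp
qed

lemma absorbing_if_zero_in_interior:
  fixes L :: "'a::euclidean_space set"
  assumes "0 \<in> interior L"
  obtains \<mu> where "0 < \<mu>" "x \<in> (\<lambda>y. \<mu> *\<^sub>R y) ` L"
proof -
  have "((\<lambda>t. t *\<^sub>R x) \<longlongrightarrow> 0 *\<^sub>R x) (at_right 0)"
    by (intro tendsto_scaleR tendsto_ident_at tendsto_const)
  then have "eventually (\<lambda>t. t *\<^sub>R x \<in> interior L) (at_right 0)"
    using assms by (auto intro: topological_tendstoD)
  then obtain t where t: "0 < t" "t *\<^sub>R x \<in> L"
    unfolding eventually_at_right_field using interior_subset by (metis dense subsetD)
  then have "x \<in> (\<lambda>y. inverse t *\<^sub>R y) ` L"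
    by (simp add: mem_scaleR_image_iff)
  then show ?thesis using t(1) by (intro that[of "inverse t"]) auto
qed

lemma gauge_norm_lessE:
  fixes L :: "'a::euclidean_space set"
  assumes "0 \<in> interior L" "gauge_norm L x < l"
  obtains s where "0 < s" "s < l" "x \<in> (\<lambda>y. s *\<^sub>R y) ` L"
proof -
  have "{\<mu>. 0 < \<mu> \<and> x \<in> (\<lambda>y. \<mu> *\<^sub>R y) ` L} \<noteq> {}"
    using absorbing_if_zero_in_interior[OF assms(1)] by blast
  from cInf_lessD[OF this] assms(2) have "\<exists>s. 0 < s \<and> s < l \<and> x \<in> (\<lambda>y. s *\<^sub>R y) ` L"
    unfolding gauge_norm_def by blast
  with that show ?thesis by blast
qed

lemma zero_in_interior_sym_body:
  fixes K :: "'a::euclidean_space set"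
  assumes "0 \<in> interior K"
  shows "0 \<in> interior (sym_body K)"
  using assms by (force simp: sym_body_def interior_negations)

lemma gauge_norm_sym_body_ge:
  fixes K :: "'a::euclidean_space set"
  assumes "0 \<in> interior K"
  shows "max (gauge_norm K x) (gauge_norm K (- x)) \<le> gauge_norm (sym_body K) x"
  unfolding gauge_norm_def[of "sym_body K"]
proof (rule cInf_greatest)
  show "{\<mu>. 0 < \<mu> \<and> x \<in> (\<lambda>y. \<mu> *\<^sub>R y) ` sym_body K} \<noteq> {}"
    using absorbing_if_zero_in_interior[OF zero_in_interior_sym_body[OF assms]] by blast
next
  fix \<mu> assume "\<mu> \<in> {\<mu>. 0 < \<mu> \<and> x \<in> (\<lambda>y. \<mu> *\<^sub>R y) ` sym_body K}"
  then obtain y where y: "0 < \<mu>" "y \<in> K" "- y \<in> K" "x = \<mu> *\<^sub>R y"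
    unfolding sym_body_def by auto
  have "x \<in> (\<lambda>y. \<mu> *\<^sub>R y) ` K" "- x \<in> (\<lambda>y. \<mu> *\<^sub>R y) ` K"
    using y by (auto intro!: image_eqI[where x = y] image_eqI[where x = "- y"])
  from this[THEN gauge_norm_le[OF y(1)]]
  show "max (gauge_norm K x) (gauge_norm K (- x)) \<le> \<mu>" by simp
qed

lemma gauge_norm_sym_body_ge_if:
  fixes K :: "'a::euclidean_space set"
  assumes "0 \<in> interior K" "B \<le> gauge_norm K (x - y) \<or> B \<le> gauge_norm K (y - x)"
  shows "B \<le> gauge_norm (sym_body K) (x - y)"
proof -
  have "gauge_norm K (x - y) \<le> gauge_norm (sym_body K) (x - y)"
    "gauge_norm K (y - x) \<le> gauge_norm (sym_body K) (x - y)"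
    using gauge_norm_sym_body_ge[OF assms(1), of "x - y"] by simp_all
  with assms(2) show ?thesis by linarith
qed

lemma gauge_norm_diff_body_le:
  assumes "x \<in> K" "y \<in> K"
  shows "gauge_norm (diff_body K) (x - y) \<le> 2"
proof (rule gauge_norm_le)
  have "(1/2) *\<^sub>R (x - y) \<in> diff_body K"
    using assms unfolding diff_body_def by blast
  moreover have "x - y = 2 *\<^sub>R ((1/2) *\<^sub>R (x - y))" by simp
  ultimately show "x - y \<in> (\<lambda>z. 2 *\<^sub>R z) ` diff_body K" by blast
qed simp

lemma ratio_ok_subset: "ratio_ok K lam S \<Longrightarrow> T \<subseteq> S \<Longrightarrow> ratio_ok K lam T"
  unfolding ratio_ok_def by blast

lemma ratio_ok_of_bounds:
  assumes "0 \<le> A" "0 < B"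
    and "\<And>p q. p \<in> S \<Longrightarrow> q \<in> S \<Longrightarrow> gauge_norm (diff_body K) (p - q) \<le> A"
    and "\<And>r s. r \<in> S \<Longrightarrow> s \<in> S \<Longrightarrow> r \<noteq> s \<Longrightarrow> B \<le> gauge_norm (sym_body K) (r - s)"
  shows "ratio_ok K (A / B) S"
  unfolding ratio_ok_def
proof (intro ballI impI)
  fix p q r s assume "p \<in> S" "q \<in> S" "r \<in> S" "s \<in> S" "r \<noteq> s"
  then have "gauge_norm (diff_body K) (p - q) \<le> A / B * B"
    using assms(2,3) by simp
  also have "\<dots> \<le> A / B * gauge_norm (sym_body K) (r - s)"
    using assms \<open>r \<in> S\<close> \<open>s \<in> S\<close> \<open>r \<noteq> s\<close> by (intro mult_left_mono) auto
  finally show "gauge_norm (diff_body K) (p - q) \<le> A / B * gauge_norm (sym_body K) (r - s)" .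
qed

lemma ecard_le_P_num:
  assumes "inj_on p I" "ratio_ok K lam (p ` I)"
  shows "ecard I \<le> P_num K lam"
proof -
  have finite_le: "enat (card J) \<le> P_num K lam" if "finite J" "J \<subseteq> I" for J
  proof -
    have "card (p ` J) = card J"
      using that assms(1) by (intro card_image) (rule inj_on_subset)
    moreover have "finite (p ` J)" "ratio_ok K lam (p ` J)"
      using that assms(2) by (auto intro: ratio_ok_subset)
    ultimately have "enat (card J) \<in> {enat (card S) | S. finite S \<and> ratio_ok K lam S}"
      by (metis (mono_tags, lifting) mem_Collect_eq)
    then show ?thesis unfolding P_num_def by (rule Sup_upper)
  qed
  show ?thesis
  proof (cases "finite I")
    case True
    then show ?thesis using finite_le unfolding ecard_def by simp
  next
    case False
    have "enat n \<le> P_num K lam" for n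
    proof -
      obtain J where "J \<subseteq> I" "finite J" "card J = n"
        using infinite_arbitrarily_large[OF False] by blast
      then show ?thesis using finite_le by blast
    qed
    then have "P_num K lam = \<infinity>"
      by (metis Suc_ile_eq enat.exhaust linorder_not_less)
    then show ?thesis unfolding ecard_def by simp
  qed
qed

lemma ecard_le_P_num_if_separated:
  fixes K :: "'a::euclidean_space set" and p :: "'i \<Rightarrow> 'a"
  assumes "0 \<in> interior K" "0 < \<delta>" "\<And>i. i \<in> I \<Longrightarrow> p i \<in> K"
    and "\<And>i j. i \<in> I \<Longrightarrow> j \<in> I \<Longrightarrow> i \<noteq> j \<Longrightarrow> \<delta> \<le> gauge_norm (sym_body K) (p i - p j)"
  shows "ecard I \<le> P_num K (2 / \<delta>)"
proof (rule ecard_le_P_num)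
  have "gauge_norm (sym_body K) 0 = 0"
    using zero_in_interior_sym_body[OF assms(1)] interior_subset by (intro gauge_norm_zero) blast
  then show "inj_on p I"
    using assms(2,4) by (metis diff_self inj_onI not_le)
  show "ratio_ok K (2 / \<delta>) (p ` I)"
  proof (rule ratio_ok_of_bounds)
    fix x y assume "x \<in> p ` I" "y \<in> p ` I"
    then obtain i j where "i \<in> I" "j \<in> I" "x = p i" "y = p j" by blast
    then show "gauge_norm (diff_body K) (x - y) \<le> 2"
      using gauge_norm_diff_body_le[OF assms(3) assms(3)] by simp
  next
    fix x y assume "x \<in> p ` I" "y \<in> p ` I" "x \<noteq> y"
    then show "\<delta> \<le> gauge_norm (sym_body K) (x - y)" using assms(4) by blast
  qed (use assms(2) in auto)
qed

lemma neg_mem_scaleR_image_if_homothets_meet: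
  fixes K :: "'a::real_vector set"
  assumes "convex K" "0 \<le> \<epsilon>" "0 \<le> l" "0 < l + \<epsilon>"
    and "(\<lambda>x. v + l *\<^sub>R x) ` K \<inter> (\<lambda>x. (- \<epsilon>) *\<^sub>R x) ` K \<noteq> {}"
  shows "- v \<in> (\<lambda>x. (l + \<epsilon>) *\<^sub>R x) ` K"
proof -
  obtain x y where "x \<in> K" "y \<in> K" "v + l *\<^sub>R x = (- \<epsilon>) *\<^sub>R y"
    using assms(5) by auto
  moreover from this have "- v = l *\<^sub>R x + \<epsilon> *\<^sub>R y"
    by (metis add.commute add_diff_cancel_left' diff_minus_eq_add minus_diff_eq scaleR_minus_left)
  ultimately show ?thesis
    using assms(1-4) by (metis convex_scaleR_add_mem)
qed

lemma gauge_norm_ge_if_not_mem_homothet: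
  fixes K :: "'a::euclidean_space set"
  assumes "convex K" "0 \<in> interior K" "0 \<le> \<epsilon>" "1 \<le> l" "l \<le> m" "b \<in> K"
    and "- ((l + \<epsilon>) *\<^sub>R a) \<notin> (\<lambda>x. - ((m + \<epsilon>) *\<^sub>R b) + m *\<^sub>R x) ` interior K"
  shows "1 - \<epsilon> \<le> gauge_norm K (b - a)"
proof (rule ccontr)
  assume "\<not> 1 - \<epsilon> \<le> gauge_norm K (b - a)"
  then obtain t where t: "0 < t" "t < 1 - \<epsilon>" "b - a \<in> (\<lambda>y. t *\<^sub>R y) ` K"
    using gauge_norm_lessE[OF assms(2)] by (metis not_le)
  then obtain z where z: "z \<in> K" "b - a = t *\<^sub>R z" by auto
  define s where "s = (l + \<epsilon>) * t + (m - l)"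
  have "0 < s" unfolding s_def using assms(3-5) t(1) by (intro add_pos_nonneg mult_pos_pos) auto
  have "(m + \<epsilon>) *\<^sub>R b - (l + \<epsilon>) *\<^sub>R a = (l + \<epsilon>) *\<^sub>R (b - a) + (m - l) *\<^sub>R b"
    by (simp add: algebra_simps)
  also have "\<dots> = ((l + \<epsilon>) * t) *\<^sub>R z + (m - l) *\<^sub>R b"
    by (simp add: z(2))
  also have "\<dots> \<in> (\<lambda>y. s *\<^sub>R y) ` K"
    using assms t z \<open>0 < s\<close> unfolding s_def by (intro convex_scaleR_add_mem) auto
  finally have "(m + \<epsilon>) *\<^sub>R b - (l + \<epsilon>) *\<^sub>R a \<in> (\<lambda>y. s *\<^sub>R y) ` K" .
  moreover have "s < m"
  proof -
    have "(l + \<epsilon>) * t < (l + \<epsilon>) * (1 - \<epsilon>)" using assms(3,4) t(2) by simp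
    also have "\<dots> \<le> l - \<epsilon> * l + \<epsilon>" using assms(3,4) by (simp add: algebra_simps)
    finally show "s < m" unfolding s_def using assms(3,4) mult_left_mono[of 1 l \<epsilon>] by simp
  qed
  ultimately have "(m + \<epsilon>) *\<^sub>R b - (l + \<epsilon>) *\<^sub>R a \<in> (\<lambda>y. m *\<^sub>R y) ` interior K"
    using scaleR_image_mem_interior_of_less[OF assms(1,2) \<open>0 < s\<close>] by blast
  then have "- ((l + \<epsilon>) *\<^sub>R a) \<in> (\<lambda>x. - ((m + \<epsilon>) *\<^sub>R b) + m *\<^sub>R x) ` interior K"
    by (force simp: algebra_simps)
  with assms(7) show False by contradiction
qed

theorem lemma20:
  fixes K :: "'a::euclidean_space set" and \<epsilon> :: real
    and I :: "'i set" and v :: "'i \<Rightarrow> 'a" and lam :: "'i \<Rightarrow> real"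
  assumes "convex_body K" and "0 \<in> interior K"
    and "0 \<le> \<epsilon>" and "\<epsilon> < 1"
    and "\<And>i j. i \<in> I \<Longrightarrow> j \<in> I \<Longrightarrow> i \<noteq> j \<Longrightarrow>
           v i \<notin> (\<lambda>x. v j + lam j *\<^sub>R x) ` interior K"
    and "\<And>i. i \<in> I \<Longrightarrow> lam i \<ge> 1"
    and "\<And>i. i \<in> I \<Longrightarrow> (\<lambda>x. v i + lam i *\<^sub>R x) ` K \<inter> (\<lambda>x. (- \<epsilon>) *\<^sub>R x) ` K \<noteq> {}"
    and "\<And>i. i \<in> I \<Longrightarrow> 0 \<notin> (\<lambda>x. v i + lam i *\<^sub>R x) ` interior K"
  shows "ecard I \<le> P_num K (2 / (1 - \<epsilon>))"
proof -
  define q where "q i = - inverse (lam i + \<epsilon>) *\<^sub>R v i" for i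
  have convex: "convex K" using assms(1) unfolding convex_body_def by simp
  have v_eq: "v i = - ((lam i + \<epsilon>) *\<^sub>R q i)" if "i \<in> I" for i
    using assms(3) assms(6)[OF that] unfolding q_def by simp
  have q_mem: "q i \<in> K" if "i \<in> I" for i
    using neg_mem_scaleR_image_if_homothets_meet[OF convex assms(3) _ _ assms(7)[OF that]]
      assms(3) assms(6)[OF that] unfolding q_def by (simp add: mem_scaleR_image_iff)
  have sep: "1 - \<epsilon> \<le> gauge_norm K (q j - q i)"
    if "i \<in> I" "j \<in> I" "i \<noteq> j" "lam i \<le> lam j" for i j
  proof (rule gauge_norm_ge_if_not_mem_homothet[OF convex assms(2,3)])
    show "- ((lam i + \<epsilon>) *\<^sub>R q i) \<notin> (\<lambda>x. - ((lam j + \<epsilon>) *\<^sub>R q j) + lam j *\<^sub>R x) ` interior K"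
      using assms(5)[OF that(1-3)] unfolding v_eq[OF that(1)] v_eq[OF that(2)] .
  qed (use that assms(6) q_mem in auto)
  show ?thesis
  proof (rule ecard_le_P_num_if_separated[OF assms(2)])
    show "1 - \<epsilon> \<le> gauge_norm (sym_body K) (q i - q j)" if "i \<in> I" "j \<in> I" "i \<noteq> j" for i j
      using that sep[of i j] sep[of j i] by (intro gauge_norm_sym_body_ge_if[OF assms(2)]) force
  qed (use assms(4) q_mem in auto)
qed

end
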